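(* Assume only upper-bound group constraints and $\mathcal S\neq\emptyset$. Let $\lambda:\mathcal U\to\mathbb R$. There exists a probability distribution $D$ over $\mathcal S$ with $D[u]\ge\lambda_u$ for all $u\in\mathcal U$ if and only if $$\max_{r\in\mathcal S}\sum_{u\in X}V(r,u)\ \ge\ \sum_{u\in X}\lambda_u\qquad\text{for all } X\subseteq\mathcal U.$$
   Context: Ranking setting: $\mathcal U=\{u_1,\dots,u_n\}$ finite set of individuals partitioned into groups $C_1,\dots,C_t$; rankings are bijections $r:\mathcal U\to[n]$. Only upper bounds: $\mathcal S=\{r:\ |\{u\in C_k: r(u)\le i\}|\le u_i^k\ \forall i\in[n],k\in[t]\}$ for given integers $u_i^k$. $V(r,u)=f(r(u))-g(u)$ with $f:[n]\to\mathbb R$ non-increasing and $g:\mathcal U\to\mathbb R$ arbitrary. For a distribution $D$ over $\mathcal S$, $D[u]=\mathbb E_{r\sim D}[V(r,u)]$. *)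

theory Defs
  imports "HOL-Probability.Probability"
begin

text \<open>Rankings of the finite set of individuals U: bijections U -> {1..card U},
  fixed to 0 outside U so that the set of rankings is finite.\<close>
definition rankings :: "'a set \<Rightarrow> ('a \<Rightarrow> nat) set" where
  "rankings U = {r. bij_betw r U {1..card U} \<and> (\<forall>u. u \<notin> U \<longrightarrow> r u = 0)}"

definition feasible :: "'a set \<Rightarrow> nat \<Rightarrow> (nat \<Rightarrow> 'a set) \<Rightarrow> (nat \<Rightarrow> nat \<Rightarrow> int) \<Rightarrow> ('a \<Rightarrow> nat) set" where
  "feasible U t C ub = {r \<in> rankings U.
     \<forall>i\<in>{1..card U}. \<forall>k\<in>{1..t}. int (card {u \<in> C k. r u \<le> i}) \<le> ub i k}"

definition util :: "(nat \<Rightarrow> real) \<Rightarrow> ('a \<Rightarrow> real) \<Rightarrow> ('a \<Rightarrow> nat) \<Rightarrow> 'a \<Rightarrow> real" where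
  "util f g r u = f (r u) - g u"

definition exp_util :: "(nat \<Rightarrow> real) \<Rightarrow> ('a \<Rightarrow> real) \<Rightarrow> ('a \<Rightarrow> nat) pmf \<Rightarrow> 'a \<Rightarrow> real" where
  "exp_util f g D u = measure_pmf.expectation D (\<lambda>r. util f g r u)"

end

theory Submission
  imports Defs "HOL-Library.List_Lexorder" "HOL-Combinatorics.Transposition"
begin

(*
  Necessity is averaging: under D the expected total utility of X is a convex combination
  of the totals of feasible rankings, hence at most their maximum.

  For sufficiency, Ville's theorem of the alternative (derived from Farkas' lemma, proved
  here by Fourier-Motzkin elimination) reduces the claim to: for every nonnegative weighting
  w of the individuals some feasible ranking r has  sum_u w u * (V(r,u) - lam u) >= 0.
  List U by decreasing weight.  With upper-bound constraints only, the lexicographically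
  least feasible ranking along this list maximises  sum_{u in X} f (r u)  simultaneously for
  all prefixes X of the list: any feasible ranking is turned into it position by position,
  using at most two transpositions per position, neither of which decreases a prefix score.
  The hypothesis applied to each prefix and Abel summation then give the required ranking.
*)

section \<open>Farkas' lemma via Fourier--Motzkin elimination\<close>

type_synonym 'v lin_constraint = "('v \<Rightarrow> real) \<times> real"

definition constraint_holds :: "'v set \<Rightarrow> ('v \<Rightarrow> real) \<Rightarrow> 'v lin_constraint \<Rightarrow> bool" where
  "constraint_holds V x c \<longleftrightarrow> snd c \<le> (\<Sum>v\<in>V. fst c v * x v)"

definition infeasibility_certificate ::
    "'v set \<Rightarrow> 'v lin_constraint set \<Rightarrow> (real \<times> 'v lin_constraint) list \<Rightarrow> bool" where
  "infeasibility_certificate V A L \<longleftrightarrow>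
     (\<forall>(y, c)\<in>set L. 0 \<le> y \<and> c \<in> A) \<and>
     (\<forall>v\<in>V. (\<Sum>(y, c)\<leftarrow>L. y * fst c v) = 0) \<and> 0 < (\<Sum>(y, c)\<leftarrow>L. y * snd c)"

definition fm_comb :: "'v \<Rightarrow> 'v lin_constraint \<Rightarrow> 'v lin_constraint \<Rightarrow> 'v lin_constraint" where
  "fm_comb v0 p n =
     ((\<lambda>v. - fst n v0 * fst p v + fst p v0 * fst n v), - fst n v0 * snd p + fst p v0 * snd n)"

definition fm_elim :: "'v \<Rightarrow> 'v lin_constraint set \<Rightarrow> 'v lin_constraint set" where
  "fm_elim v0 A = {c\<in>A. fst c v0 = 0} \<union>
     (\<lambda>(p, n). fm_comb v0 p n) ` ({p\<in>A. 0 < fst p v0} \<times> {n\<in>A. fst n v0 < 0})"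

lemma finite_fm_elim: "finite A \<Longrightarrow> finite (fm_elim v0 A)"
  by (simp add: fm_elim_def)

lemma fm_elim_eliminates: "c \<in> fm_elim v0 A \<Longrightarrow> fst c v0 = 0"
  by (auto simp: fm_elim_def fm_comb_def)

lemma sum_fm_comb:
  "(\<Sum>v\<in>V. fst (fm_comb v0 p n) v * x v) =
     fst p v0 * (\<Sum>v\<in>V. fst n v * x v) - fst n v0 * (\<Sum>v\<in>V. fst p v * x v)"
  by (simp add: fm_comb_def sum_distrib_left sum_subtractf[symmetric] algebra_simps)

lemma exists_between_finite:
  fixes L H :: "'a :: linorder set"
  assumes "finite L" "finite H" "\<forall>l\<in>L. \<forall>h\<in>H. l \<le> h"
  shows "\<exists>\<tau>. (\<forall>l\<in>L. l \<le> \<tau>) \<and> (\<forall>h\<in>H. \<tau> \<le> h)"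
proof (cases "L = {}")
  case True
  then show ?thesis
    using assms(2) by (cases "H = {}") (auto intro!: exI[of _ "Min H"])
next
  case False
  then show ?thesis
    using assms by (intro exI[of _ "Max L"]) (auto simp: Max_le_iff)
qed

lemma fm_comb_bounds:
  assumes "constraint_holds V x (fm_comb v0 p n)" "0 < fst p v0" "fst n v0 < 0"
  shows "(snd p - (\<Sum>v\<in>V. fst p v * x v)) / fst p v0 \<le> (snd n - (\<Sum>v\<in>V. fst n v * x v)) / fst n v0"
proof -
  define R where "R c = (\<Sum>v\<in>V. fst c v * x v)" for c :: "'a lin_constraint"
  have "snd (fm_comb v0 p n) \<le> fst p v0 * R n - fst n v0 * R p"
    using assms(1) by (simp add: constraint_holds_def sum_fm_comb R_def)
  then have "0 \<le> - fst n v0 * (R p - snd p) + fst p v0 * (R n - snd n)"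
    by (simp add: fm_comb_def algebra_simps)
  then show ?thesis
    using assms(2,3) by (simp add: R_def[symmetric] divide_simps) (simp add: algebra_simps)
qed

lemma fm_elim_solvable:
  assumes "finite A" "finite V" "v0 \<notin> V" "\<forall>c\<in>fm_elim v0 A. constraint_holds V x c"
  shows "\<exists>\<tau>. \<forall>c\<in>A. constraint_holds (insert v0 V) (x(v0 := \<tau>)) c"
proof -
  define R where "R c = (\<Sum>v\<in>V. fst c v * x v)" for c :: "'a lin_constraint"
  define \<beta> where "\<beta> c = (snd c - R c) / fst c v0" for c :: "'a lin_constraint"
  define P N where "P = {p\<in>A. 0 < fst p v0}" and "N = {n\<in>A. fst n v0 < 0}"
  have holds_upd: "constraint_holds (insert v0 V) (x(v0 := \<tau>)) c \<longleftrightarrow> snd c - R c \<le> \<tau> * fst c v0"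
    for c \<tau>
  proof -
    have "(\<Sum>v\<in>V. fst c v * (x(v0 := \<tau>)) v) = R c"
      unfolding R_def using assms(3) by (intro sum.cong) auto
    then show ?thesis
      using assms(2,3) by (simp add: constraint_holds_def algebra_simps)
  qed
  have "\<beta> p \<le> \<beta> n" if "p \<in> P" "n \<in> N" for p n
  proof -
    have "fm_comb v0 p n \<in> fm_elim v0 A"
      using that by (force simp: fm_elim_def P_def N_def)
    then have "constraint_holds V x (fm_comb v0 p n)"
      using assms(4) by blast
    moreover have "0 < fst p v0" "fst n v0 < 0"
      using that by (simp_all add: P_def N_def)
    ultimately show ?thesis
      unfolding \<beta>_def R_def by (rule fm_comb_bounds)
  qed
  then obtain \<tau> where lo: "\<forall>p\<in>P. \<beta> p \<le> \<tau>" and hi: "\<forall>n\<in>N. \<tau> \<le> \<beta> n"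
    using exists_between_finite[of "\<beta> ` P" "\<beta> ` N"] assms(1) by (auto simp: P_def N_def)
  have "constraint_holds (insert v0 V) (x(v0 := \<tau>)) c" if "c \<in> A" for c
  proof (cases "fst c v0" "0::real" rule: linorder_cases)
    case less
    then have "\<tau> \<le> \<beta> c" using hi that unfolding N_def by blast
    then show ?thesis using less by (simp add: holds_upd \<beta>_def neg_le_divide_eq)
  next
    case equal
    then have "c \<in> fm_elim v0 A" using that by (simp add: fm_elim_def)
    then have "constraint_holds V x c" using assms(4) by blast
    then show ?thesis
      unfolding holds_upd using equal by (simp add: constraint_holds_def R_def)
  next
    case greater
    then have "\<beta> c \<le> \<tau>" using lo that unfolding P_def by blast
    then show ?thesis using greater by (simp add: holds_upd \<beta>_def pos_divide_le_eq)
  qed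
  then show ?thesis by blast
qed

lemma fm_elim_lift_combination:
  assumes "\<forall>(y, c)\<in>set L. 0 \<le> y \<and> c \<in> fm_elim v0 A"
  shows "\<exists>L'. (\<forall>(y, c)\<in>set L'. 0 \<le> y \<and> c \<in> A) \<and>
    (\<forall>G. (\<forall>p n. G (fm_comb v0 p n) = - fst n v0 * G p + fst p v0 * G n) \<longrightarrow>
         (\<Sum>(y, c)\<leftarrow>L'. y * G c) = (\<Sum>(y, c)\<leftarrow>L. y * G c))"
  using assms
proof (induction L)
  case Nil
  show ?case by (intro exI[of _ "[]"]) simp
next
  case (Cons e L)
  obtain y c where e: "e = (y, c)" by (cases e)
  then have y: "0 \<le> y" and c: "c \<in> fm_elim v0 A"
    using Cons.prems by auto
  have "\<forall>(y, c)\<in>set L. 0 \<le> y \<and> c \<in> fm_elim v0 A"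
    using Cons.prems by simp
  then obtain L' where L': "\<forall>(y, c)\<in>set L'. 0 \<le> y \<and> c \<in> A"
    and sums: "\<forall>G. (\<forall>p n. G (fm_comb v0 p n) = - fst n v0 * G p + fst p v0 * G n) \<longrightarrow>
         (\<Sum>(y, c)\<leftarrow>L'. y * G c) = (\<Sum>(y, c)\<leftarrow>L. y * G c)"
    using Cons.IH by blast
  show ?case
  proof (cases "c \<in> A")
    case True
    then show ?thesis
      using L' sums y by (intro exI[of _ "(y, c) # L'"]) (auto simp: e)
  next
    case False
    then obtain p n where pn: "p \<in> A" "0 < fst p v0" "n \<in> A" "fst n v0 < 0" "c = fm_comb v0 p n"
      using c by (auto simp: fm_elim_def)
    let ?L'' = "(y * - fst n v0, p) # (y * fst p v0, n) # L'"
    have "\<forall>(y, c)\<in>set ?L''. 0 \<le> y \<and> c \<in> A"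
      using L' y pn by (auto simp: mult_nonneg_nonpos)
    moreover have "(\<Sum>(y, c)\<leftarrow>?L''. y * G c) = (\<Sum>(y, c)\<leftarrow>e # L. y * G c)"
      if law: "\<forall>p n. G (fm_comb v0 p n) = - fst n v0 * G p + fst p v0 * G n" for G
    proof -
      have "G c = - fst n v0 * G p + fst p v0 * G n"
        using law[rule_format, of p n] pn(5) by simp
      moreover have "(\<Sum>(y, c)\<leftarrow>L'. y * G c) = (\<Sum>(y, c)\<leftarrow>L. y * G c)"
        using sums law by blast
      ultimately show ?thesis
        by (simp add: e ring_distribs mult_ac)
    qed
    ultimately show ?thesis by blast
  qed
qed

lemma fm_elim_certificate:
  assumes cert: "infeasibility_certificate V (fm_elim v0 A) L"
  shows "\<exists>L'. infeasibility_certificate (insert v0 V) A L'"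
proof -
  have L: "\<forall>(y, c)\<in>set L. 0 \<le> y \<and> c \<in> fm_elim v0 A"
    using cert by (simp add: infeasibility_certificate_def)
  then obtain L' where L': "\<forall>(y, c)\<in>set L'. 0 \<le> y \<and> c \<in> A"
    and sums: "\<forall>G. (\<forall>p n. G (fm_comb v0 p n) = - fst n v0 * G p + fst p v0 * G n) \<longrightarrow>
         (\<Sum>(y, c)\<leftarrow>L'. y * G c) = (\<Sum>(y, c)\<leftarrow>L. y * G c)"
    using fm_elim_lift_combination[OF L] by blast
  have coeff: "(\<Sum>(y, c)\<leftarrow>L'. y * fst c v) = (\<Sum>(y, c)\<leftarrow>L. y * fst c v)" for v
    by (rule sums[rule_format]) (simp add: fm_comb_def)
  have "(\<Sum>(y, c)\<leftarrow>L. y * fst c v0) = (\<Sum>e\<leftarrow>L. 0)"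
    using L by (intro arg_cong[where f = sum_list] map_cong) (auto dest!: fm_elim_eliminates)
  then have "\<forall>v\<in>insert v0 V. (\<Sum>(y, c)\<leftarrow>L'. y * fst c v) = 0"
    using cert by (simp add: coeff infeasibility_certificate_def)
  moreover have "(\<Sum>(y, c)\<leftarrow>L'. y * snd c) = (\<Sum>(y, c)\<leftarrow>L. y * snd c)"
    by (rule sums[rule_format]) (simp add: fm_comb_def)
  ultimately have "infeasibility_certificate (insert v0 V) A L'"
    using cert L' by (simp add: infeasibility_certificate_def)
  then show ?thesis by blast
qed

lemma fourier_motzkin:
  assumes "finite V" "finite A" "\<not> (\<exists>x. \<forall>c\<in>A. constraint_holds V x c)"
  shows "\<exists>L. infeasibility_certificate V A L"
  using assms
proof (induction V arbitrary: A rule: finite_induct)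
  case empty
  then obtain c where "c \<in> A" "0 < snd c"
    by (auto simp: constraint_holds_def not_le)
  then show ?case
    by (intro exI[of _ "[(1, c)]"]) (auto simp: infeasibility_certificate_def)
next
  case (insert v0 V)
  have "\<not> (\<exists>x. \<forall>c\<in>fm_elim v0 A. constraint_holds V x c)"
    using fm_elim_solvable[OF insert.prems(1) insert.hyps(1,2)] insert.prems(2) by blast
  then obtain L where "infeasibility_certificate V (fm_elim v0 A) L"
    using insert.IH finite_fm_elim[OF insert.prems(1)] by blast
  then show ?case by (rule fm_elim_certificate)
qed

lemma sum_regroup_list_weights:
  fixes \<eta> G :: "_ \<Rightarrow> 'b :: semiring_0"
  assumes "finite I" "\<forall>e\<in>set L. k e \<in> I"
  shows "(\<Sum>i\<in>I. (\<Sum>e\<leftarrow>L. if k e = i then \<eta> e else 0) * G i) = (\<Sum>e\<leftarrow>L. \<eta> e * G (k e))"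
  using assms(2)
proof (induction L)
  case (Cons e L)
  have "(\<Sum>i\<in>I. (if k e = i then \<eta> e else 0) * G i) = \<eta> e * G (k e)"
    using Cons.prems assms(1) by (simp add: if_distrib[where f = "\<lambda>z. z * _"] sum.delta cong: if_cong)
  then show ?case
    using Cons by (simp add: distrib_right sum.distrib)
qed simp

lemma farkas_lemma:
  fixes a :: "'i \<Rightarrow> 'v \<Rightarrow> real" and b :: "'i \<Rightarrow> real"
  assumes "finite I" "finite V" "\<not> (\<exists>x. \<forall>i\<in>I. b i \<le> (\<Sum>v\<in>V. a i v * x v))"
  shows "\<exists>y. (\<forall>i\<in>I. 0 \<le> y i) \<and> (\<forall>v\<in>V. (\<Sum>i\<in>I. y i * a i v) = 0) \<and> 0 < (\<Sum>i\<in>I. y i * b i)"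
proof -
  define h where "h i = (a i, b i)" for i
  have "\<not> (\<exists>x. \<forall>c\<in>h ` I. constraint_holds V x c)"
    using assms(3) by (simp add: constraint_holds_def h_def)
  then obtain L where L: "infeasibility_certificate V (h ` I) L"
    using fourier_motzkin[OF assms(2)] assms(1) by blast
  \<comment> \<open>Distinct indices may carry the same constraint; its multipliers go to one chosen preimage.\<close>
  define k where "k e = inv_into I h (snd e)" for e :: "real \<times> 'v lin_constraint"
  define y where "y i = (\<Sum>e\<leftarrow>L. if k e = i then fst e else 0)" for i
  have k: "k e \<in> I" "h (k e) = snd e" if "e \<in> set L" for e
    using L that by (auto simp: infeasibility_certificate_def k_def inv_into_into f_inv_into_f)
  have regroup: "(\<Sum>i\<in>I. y i * F (h i)) = (\<Sum>(\<eta>, c)\<leftarrow>L. \<eta> * F c)" for F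
  proof -
    have "(\<Sum>i\<in>I. y i * F (h i)) = (\<Sum>e\<leftarrow>L. fst e * F (h (k e)))"
      unfolding y_def using assms(1) k(1) by (intro sum_regroup_list_weights) auto
    also have "\<dots> = (\<Sum>(\<eta>, c)\<leftarrow>L. \<eta> * F c)"
      using k(2) by (intro arg_cong[where f = sum_list] map_cong) (auto simp: split_beta)
    finally show ?thesis .
  qed
  have "\<forall>e\<in>set L. 0 \<le> fst e"
    using L unfolding infeasibility_certificate_def by fastforce
  then have "\<forall>i\<in>I. 0 \<le> y i"
    by (auto simp: y_def intro!: sum_list_nonneg)
  moreover have "\<forall>v\<in>V. (\<Sum>i\<in>I. y i * a i v) = 0"
    using regroup[of "\<lambda>c. fst c _"] L by (simp add: h_def infeasibility_certificate_def)
  moreover have "0 < (\<Sum>i\<in>I. y i * b i)"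
    using regroup[of snd] L by (simp add: h_def infeasibility_certificate_def)
  ultimately show ?thesis by blast
qed

section \<open>Ville's alternative and distributions on finite sets\<close>

lemma ville_alternative:
  fixes \<psi> :: "'s \<Rightarrow> 'u \<Rightarrow> real"
  assumes "finite S" "finite U"
    and "\<forall>w. (\<forall>u\<in>U. 0 \<le> w u) \<longrightarrow> (\<exists>s\<in>S. 0 \<le> (\<Sum>u\<in>U. w u * \<psi> s u))"
  shows "\<exists>p. (\<forall>s\<in>S. 0 \<le> p s) \<and> (\<Sum>s\<in>S. p s) = 1 \<and> (\<forall>u\<in>U. 0 \<le> (\<Sum>s\<in>S. p s * \<psi> s u))"
proof -
  \<comment> \<open>Index \<open>None\<close>: total mass at least 1; \<open>Some (Inl s)\<close>: \<open>p s \<ge> 0\<close>; \<open>Some (Inr u)\<close>: payoff of \<open>u\<close>.\<close>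
  define I where "I = insert None (Some ` (Inl ` S \<union> Inr ` U))"
  define a where "a i s' = (case i of None \<Rightarrow> 1
      | Some (Inl s) \<Rightarrow> if s' = s then 1 else 0 | Some (Inr u) \<Rightarrow> \<psi> s' u)" for i s'
  define b :: "('s + 'u) option \<Rightarrow> real" where "b i = (case i of None \<Rightarrow> 1 | Some _ \<Rightarrow> 0)" for i
  have sum_Inl_Inr: "(\<Sum>z\<in>Inl ` S \<union> Inr ` U. G z) = (\<Sum>s\<in>S. G (Inl s)) + (\<Sum>u\<in>U. G (Inr u))"
    for G :: "'s + 'u \<Rightarrow> real"
    using assms(1,2) by (subst sum.union_disjoint) (auto simp: sum.reindex)
  have sum_I: "(\<Sum>i\<in>I. F i) = F None + (\<Sum>s\<in>S. F (Some (Inl s))) + (\<Sum>u\<in>U. F (Some (Inr u)))"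
    for F :: "('s + 'u) option \<Rightarrow> real"
    using assms(1,2) by (simp add: I_def sum.reindex sum_Inl_Inr)
  have delta: "(\<Sum>s'\<in>S. (if s' = s then 1 else 0) * z s') = z s"
    "(\<Sum>s'\<in>S. z s' * (if s = s' then 1 else 0)) = z s" if "s \<in> S" for s and z :: "'s \<Rightarrow> real"
    using that assms(1) by (simp_all add: if_distrib[where f = "\<lambda>z. z * _"]
        if_distrib[where f = "\<lambda>y. _ * y"] sum.delta cong: if_cong)
  have "\<exists>x. \<forall>i\<in>I. b i \<le> (\<Sum>s\<in>S. a i s * x s)"
  proof (rule ccontr)
    assume "\<not> ?thesis"
    then obtain y where y_nonneg: "\<forall>i\<in>I. 0 \<le> y i" and y_zero: "\<forall>s\<in>S. (\<Sum>i\<in>I. y i * a i s) = 0"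
      and y_pos: "0 < (\<Sum>i\<in>I. y i * b i)"
      using farkas_lemma[of I S b a] assms(1,2) by (auto simp: I_def)
    obtain s where s: "s \<in> S" "0 \<le> (\<Sum>u\<in>U. y (Some (Inr u)) * \<psi> s u)"
      using assms(3)[rule_format, of "\<lambda>u. y (Some (Inr u))"] y_nonneg by (auto simp: I_def)
    have "y None + y (Some (Inl s)) + (\<Sum>u\<in>U. y (Some (Inr u)) * \<psi> s u) = 0"
      using y_zero s(1) by (simp add: sum_I a_def delta)
    moreover have "0 < y None" using y_pos by (simp add: sum_I b_def)
    moreover have "0 \<le> y (Some (Inl s))" using y_nonneg s(1) by (simp add: I_def)
    ultimately show False using s(2) by linarith
  qed
  then obtain x where x: "\<forall>i\<in>I. b i \<le> (\<Sum>s\<in>S. a i s * x s)" by blast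
  have x_nonneg: "0 \<le> x s" if "s \<in> S" for s
    using x[rule_format, of "Some (Inl s)"] that by (simp add: I_def a_def b_def delta)
  have x_total: "1 \<le> (\<Sum>s\<in>S. x s)"
    using x by (simp add: I_def a_def b_def)
  have x_payoff: "0 \<le> (\<Sum>s\<in>S. x s * \<psi> s u)" if "u \<in> U" for u
    using x[rule_format, of "Some (Inr u)"] that by (simp add: I_def a_def b_def mult.commute)
  define p where "p s = x s / (\<Sum>s\<in>S. x s)" for s
  have "\<forall>s\<in>S. 0 \<le> p s" using x_nonneg x_total by (simp add: p_def)
  moreover have "(\<Sum>s\<in>S. p s) = 1"
    using x_total by (simp add: p_def sum_divide_distrib[symmetric])
  moreover have "\<forall>u\<in>U. 0 \<le> (\<Sum>s\<in>S. p s * \<psi> s u)"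
    using x_payoff x_total by (simp add: p_def sum_divide_distrib[symmetric])
  ultimately show ?thesis by blast
qed

lemma exists_pmf_with_weights:
  fixes p :: "'a \<Rightarrow> real"
  assumes "finite S" "\<forall>s\<in>S. 0 \<le> p s" "(\<Sum>s\<in>S. p s) = 1"
  shows "\<exists>D. set_pmf D \<subseteq> S \<and> (\<forall>h. measure_pmf.expectation D h = (\<Sum>s\<in>S. p s * h s))"
proof -
  define q where "q s = (if s \<in> S then p s else 0)" for s
  have q_nonneg: "0 \<le> q s" for s
    using assms(2) by (simp add: q_def)
  have "(\<integral>\<^sup>+s. ennreal (q s) \<partial>count_space UNIV) = (\<Sum>s\<in>S. ennreal (q s))"
    by (rule nn_integral_count_space') (use assms(1) in \<open>auto simp: q_def\<close>)
  also have "\<dots> = ennreal (\<Sum>s\<in>S. p s)"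
    using assms(2) by (simp add: q_def sum_ennreal)
  also have "\<dots> = 1"
    using assms(3) by simp
  finally have prob: "(\<integral>\<^sup>+s. ennreal (q s) \<partial>count_space UNIV) = 1" .
  define D where "D = embed_pmf q"
  have pmf_D: "pmf D s = q s" for s
    unfolding D_def by (rule pmf_embed_pmf[OF q_nonneg prob])
  have set_D: "set_pmf D \<subseteq> S"
    by (auto simp: set_pmf_eq pmf_D q_def)
  have "measure_pmf.expectation D h = (\<Sum>s\<in>S. p s * h s)" for h
  proof -
    have "measure_pmf.expectation D h = (\<Sum>s\<in>S. h s * pmf D s)"
      using assms(1) set_D by (intro integral_measure_pmf_real) auto
    then show ?thesis by (simp add: pmf_D q_def mult.commute)
  qed
  then show ?thesis using set_D by blast
qed

lemma sum_expectation_le_Max: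
  fixes h :: "'u \<Rightarrow> 's \<Rightarrow> real"
  assumes "finite S" "set_pmf D \<subseteq> S"
  shows "(\<Sum>u\<in>X. measure_pmf.expectation D (h u)) \<le> Max ((\<lambda>s. \<Sum>u\<in>X. h u s) ` S)"
proof -
  define M where "M = Max ((\<lambda>s. \<Sum>u\<in>X. h u s) ` S)"
  have "(\<Sum>u\<in>X. measure_pmf.expectation D (h u)) = (\<Sum>u\<in>X. \<Sum>s\<in>S. h u s * pmf D s)"
    using assms by (intro sum.cong refl integral_measure_pmf_real) auto
  also have "\<dots> = (\<Sum>s\<in>S. pmf D s * (\<Sum>u\<in>X. h u s))"
    by (subst sum.swap) (simp add: sum_distrib_left mult.commute)
  also have "\<dots> \<le> (\<Sum>s\<in>S. pmf D s * M)"
    using assms(1) by (intro sum_mono mult_left_mono) (auto simp: M_def)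
  also have "\<dots> = M"
    using sum_pmf_eq_1[OF assms] by (simp add: sum_distrib_right[symmetric])
  finally show ?thesis by (simp add: M_def)
qed

section \<open>Rankings, transpositions and prefix scores\<close>

lemma ranking_range: "r \<in> rankings U \<Longrightarrow> u \<in> U \<Longrightarrow> r u \<in> {1..card U}"
  unfolding rankings_def by (auto dest: bij_betw_apply)

lemma ranking_outside: "r \<in> rankings U \<Longrightarrow> u \<notin> U \<Longrightarrow> r u = 0"
  unfolding rankings_def by auto

lemma ranking_inj_on: "r \<in> rankings U \<Longrightarrow> inj_on r U"
  unfolding rankings_def bij_betw_def by auto

lemma ranking_surj:
  assumes "r \<in> rankings U" "i \<in> {1..card U}"
  shows "\<exists>u\<in>U. r u = i"
proof -
  have "i \<in> r ` U" using assms unfolding rankings_def bij_betw_def by auto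
  then show ?thesis by blast
qed

lemma ranking_eqI: "r \<in> rankings U \<Longrightarrow> r' \<in> rankings U \<Longrightarrow> \<forall>u\<in>U. r u = r' u \<Longrightarrow> r = r'"
  unfolding fun_eq_iff by (metis ranking_outside)

lemma finite_rankings: "finite U \<Longrightarrow> finite (rankings U)"
proof -
  assume "finite U"
  moreover have "rankings U \<subseteq> {r. \<forall>u. (u \<in> U \<longrightarrow> r u \<in> {1..card U}) \<and> (u \<notin> U \<longrightarrow> r u = 0)}"
    using ranking_range ranking_outside by fastforce
  ultimately show ?thesis
    using finite_set_of_finite_funs[of U "{1..card U}" 0] finite_subset by blast
qed

lemma rankings_swap:
  assumes "r \<in> rankings U" "x \<in> U" "y \<in> U"
  shows "r \<circ> Transposition.transpose x y \<in> rankings U"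
proof -
  have "bij_betw (r \<circ> Transposition.transpose x y) U {1..card U}"
    using assms bij_betw_swap_iff[of x U y r] unfolding rankings_def by simp
  moreover have "(r \<circ> Transposition.transpose x y) u = 0" if "u \<notin> U" for u
    using that assms(2,3) ranking_outside[OF assms(1) that] by (metis comp_apply transpose_apply_other)
  ultimately show ?thesis unfolding rankings_def by simp
qed
lemma card_swap_same_side:
  assumes "x \<in> C \<longleftrightarrow> y \<in> C"
  shows "card {u\<in>C. (r \<circ> Transposition.transpose x y) u \<le> i} = card {u\<in>C. r u \<le> i}"
proof -
  have "Transposition.transpose x y u \<in> C \<longleftrightarrow> u \<in> C" for u
    using assms by (cases "u = x"; cases "u = y") auto
  then have "{u\<in>C. (r \<circ> Transposition.transpose x y) u \<le> i} = Transposition.transpose x y ` {u\<in>C. r u \<le> i}"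
    by (auto simp: in_transpose_image_iff)
  then show ?thesis by (simp add: card_image)
qed

lemma card_swap_cross:
  assumes "x \<in> C" "y \<notin> C" "finite C"
  shows "int (card {u\<in>C. (r \<circ> Transposition.transpose x y) u \<le> i}) =
    int (card {u\<in>C. r u \<le> i}) - of_bool (r x \<le> i) + of_bool (r y \<le> i)"
proof -
  define A where "A = {u\<in>C. r u \<le> i}"
  have A: "finite A" "x \<in> A \<longleftrightarrow> r x \<le> i"
    using assms by (simp_all add: A_def)
  then have A_pos: "r x \<le> i \<Longrightarrow> 0 < card A"
    by (auto simp: card_gt_0_iff)
  have "{u\<in>C. (r \<circ> Transposition.transpose x y) u \<le> i} = (if r y \<le> i then insert x A else A - {x})"
    using assms(1,2) by (auto simp: A_def Transposition.transpose_def)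
  then show ?thesis
    using A A_pos by (auto simp: card_insert_if card_Diff_singleton_if of_nat_diff simp flip: A_def)
qed

definition score :: "(nat \<Rightarrow> real) \<Rightarrow> ('a \<Rightarrow> nat) \<Rightarrow> 'a set \<Rightarrow> real" where
  "score f r X = (\<Sum>u\<in>X. f (r u))"

lemma sum_util_eq_score: "(\<Sum>u\<in>X. util f g r u) = score f r X - (\<Sum>u\<in>X. g u)"
  by (simp add: util_def score_def sum_subtractf)

lemma score_swap_mono:
  assumes "finite X" "f (r x) \<le> f (r y)" "y \<in> X \<Longrightarrow> x \<in> X"
  shows "score f r X \<le> score f (r \<circ> Transposition.transpose x y) X"
proof (cases "x \<in> X \<and> y \<in> X")
  case True
  then have "score f (r \<circ> Transposition.transpose x y) X = score f r X"
    unfolding score_def using sum.reindex[of "Transposition.transpose x y" X "\<lambda>u. f (r u)"] by simp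
  then show ?thesis by simp
next
  case False
  then have "y \<notin> X" using assms(3) by blast
  have "(r \<circ> Transposition.transpose x y) u = r u" if "u \<in> X - {x}" for u
  proof -
    have "u \<noteq> x" "u \<noteq> y" using that \<open>y \<notin> X\<close> by auto
    then show ?thesis by simp
  qed
  then have unchanged: "score f (r \<circ> Transposition.transpose x y) (X - {x}) = score f r (X - {x})"
    unfolding score_def by (intro sum.cong) auto
  show ?thesis
  proof (cases "x \<in> X")
    case True
    then show ?thesis
      using unchanged assms(1,2) \<open>y \<notin> X\<close> by (simp add: score_def sum.remove[of X x])
  next
    case False
    then show ?thesis using unchanged by simp
  qed
qed

definition prefix_score_le :: "(nat \<Rightarrow> real) \<Rightarrow> 'a list \<Rightarrow> ('a \<Rightarrow> nat) \<Rightarrow> ('a \<Rightarrow> nat) \<Rightarrow> bool" where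
  "prefix_score_le f us r r' \<longleftrightarrow> (\<forall>k. score f r (set (take k us)) \<le> score f r' (set (take k us)))"

lemma prefix_score_le_refl [simp]: "prefix_score_le f us r r"
  by (simp add: prefix_score_le_def)

lemma prefix_score_le_trans:
  "prefix_score_le f us r r' \<Longrightarrow> prefix_score_le f us r' r'' \<Longrightarrow> prefix_score_le f us r r''"
  unfolding prefix_score_le_def by (meson order_trans)

lemma nth_not_mem_take: "distinct us \<Longrightarrow> m < length us \<Longrightarrow> us ! m \<notin> set (take m us)"
  by (auto simp: in_set_conv_nth nth_eq_iff_index_eq)

lemma nth_mem_take_if_later_mem_take:
  assumes "m < length us" "v \<notin> set (take m us)" "v \<in> set (take k us)"
  shows "us ! m \<in> set (take k us)"
proof -
  have "m < k"
    using assms(2,3) set_take_subset_set_take[of k m us] by (meson not_le subsetD)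
  then show ?thesis
    using assms(1) by (metis length_take min_less_iff_conj nth_mem nth_take)
qed

lemma lex_less_map_first_difference:
  assumes "m < length us" "\<forall>u\<in>set (take m us). r u = r' u" "r (us ! m) < r' (us ! m)"
  shows "map r us < map r' us"
proof -
  have "take m (map r us) = take m (map r' us)"
    using assms(2) by (simp add: take_map)
  then show ?thesis
    unfolding list_less_def lexord_take_index_conv using assms(1,3) by auto
qed

lemma abel_summation_nonneg:
  fixes w \<phi> :: "'a \<Rightarrow> real"
  assumes "distinct us" "sorted_wrt (\<lambda>a b. w b \<le> w a) us" "\<forall>u\<in>set us. 0 \<le> w u"
    "\<forall>k. 0 \<le> (\<Sum>u\<in>set (take k us). \<phi> u)"
  shows "0 \<le> (\<Sum>u\<in>set us. w u * \<phi> u)"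
  using assms
proof (induction us arbitrary: w rule: rev_induct)
  case (snoc z xs)
  have zx: "z \<notin> set xs" and dxs: "distinct xs"
    using snoc.prems(1) by auto
  have sxs: "sorted_wrt (\<lambda>a b. w b \<le> w a) xs" and wz: "\<forall>a\<in>set xs. w z \<le> w a"
    using snoc.prems(2) by (auto simp: sorted_wrt_append)
  define w' where "w' u = w u - w z" for u
  have "0 \<le> (\<Sum>u\<in>set xs. w' u * \<phi> u)"
  proof (rule snoc.IH[OF dxs])
    show "sorted_wrt (\<lambda>a b. w' b \<le> w' a) xs" using sxs by (simp add: w'_def)
    show "\<forall>u\<in>set xs. 0 \<le> w' u" using wz by (simp add: w'_def)
    show "\<forall>k. 0 \<le> (\<Sum>u\<in>set (take k xs). \<phi> u)"
    proof
      fix k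
      have "take k xs = take (min k (length xs)) (xs @ [z])" by (simp add: min_def)
      then show "0 \<le> (\<Sum>u\<in>set (take k xs). \<phi> u)" using snoc.prems(4) by metis
    qed
  qed
  moreover have "0 \<le> (\<Sum>u\<in>set xs. \<phi> u) + \<phi> z"
  proof -
    have "0 \<le> (\<Sum>u\<in>set (take (length (xs @ [z])) (xs @ [z])). \<phi> u)" using snoc.prems(4) by blast
    then show ?thesis using zx by (simp add: add.commute)
  qed
  moreover have "0 \<le> w z" using snoc.prems(3) by simp
  ultimately have "0 \<le> (\<Sum>u\<in>set xs. w' u * \<phi> u) + w z * ((\<Sum>u\<in>set xs. \<phi> u) + \<phi> z)"
    by simp
  also have "\<dots> = (\<Sum>u\<in>set (xs @ [z]). w u * \<phi> u)"
    using zx by (simp add: w'_def left_diff_distrib sum_subtractf sum_distrib_left distrib_left add.commute)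
  finally show ?case .
qed simp

section \<open>Prefix-optimal feasible rankings\<close>

locale group_constraints =
  fixes U :: "'a set" and t :: nat and C :: "nat \<Rightarrow> 'a set" and ub :: "nat \<Rightarrow> nat \<Rightarrow> int"
  assumes finite_U: "finite U"
    and groups_cover: "(\<Union>k\<in>{1..t}. C k) = U"
    and groups_disjoint: "\<forall>k\<in>{1..t}. \<forall>l\<in>{1..t}. k \<noteq> l \<longrightarrow> C k \<inter> C l = {}"
begin

lemma group_exists: "u \<in> U \<Longrightarrow> \<exists>k\<in>{1..t}. u \<in> C k"
  using groups_cover by auto

lemma group_unique: "k \<in> {1..t} \<Longrightarrow> l \<in> {1..t} \<Longrightarrow> u \<in> C k \<Longrightarrow> u \<in> C l \<Longrightarrow> k = l"
  using groups_disjoint by blast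

lemma group_subset: "k \<in> {1..t} \<Longrightarrow> C k \<subseteq> U"
  using groups_cover by auto

lemma finite_group: "k \<in> {1..t} \<Longrightarrow> finite (C k)"
  using group_subset finite_U finite_subset by blast

lemma finite_feasible: "finite (feasible U t C ub)"
  using finite_rankings[OF finite_U] unfolding feasible_def by (rule finite_subset[rotated]) auto

lemma feasible_swap_within_group:
  assumes r: "r \<in> feasible U t C ub" and a: "a \<in> {1..t}" "x \<in> C a" "y \<in> C a"
  shows "r \<circ> Transposition.transpose x y \<in> feasible U t C ub"
proof -
  have "card {u\<in>C k. (r \<circ> Transposition.transpose x y) u \<le> i} = card {u\<in>C k. r u \<le> i}"
    if "k \<in> {1..t}" for k i
    using group_unique[OF that a(1)] a(2,3) by (intro card_swap_same_side) blast
  moreover have "r \<circ> Transposition.transpose x y \<in> rankings U"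
    using r group_subset[OF a(1)] a(2,3) by (intro rankings_swap) (auto simp: feasible_def)
  ultimately show ?thesis
    using r by (simp add: feasible_def)
qed

lemma feasible_swap_down:
  assumes r: "r \<in> feasible U t C ub" and rs: "rs \<in> feasible U t C ub"
    and a: "a \<in> {1..t}" "x \<in> C a" and z: "z \<in> U" "z \<notin> C a"
    and rz: "r z = rs x" "rs x < r x"
    and below: "\<forall>u\<in>C a. r u < r x \<longrightarrow> r u = rs u"
  shows "r \<circ> Transposition.transpose x z \<in> feasible U t C ub"
proof -
  let ?r' = "r \<circ> Transposition.transpose x z"
  have bound: "int (card {u\<in>C k. r u \<le> i}) \<le> ub i k" "int (card {u\<in>C k. rs u \<le> i}) \<le> ub i k"
    if "i \<in> {1..card U}" "k \<in> {1..t}" for i k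
    using r rs that unfolding feasible_def by blast+
  \<comment> \<open>Group \<open>a\<close> gains a member at threshold \<open>i\<close> only if \<open>rs x \<le> i < r x\<close>; its members
    ranked at most \<open>i\<close> by \<open>r\<close> are then ranked alike by \<open>rs\<close>, which also ranks \<open>x\<close> there.\<close>
  have gain: "int (card {u\<in>C a. r u \<le> i}) < int (card {u\<in>C a. rs u \<le> i})"
    if "rs x \<le> i" "i < r x" for i
  proof -
    have "{u\<in>C a. r u \<le> i} \<subset> {u\<in>C a. rs u \<le> i}"
      using below that a(2) by force
    then show ?thesis
      using finite_group[OF a(1)] by (simp add: psubset_card_mono)
  qed
  have "int (card {u\<in>C k. ?r' u \<le> i}) \<le> ub i k" if i: "i \<in> {1..card U}" and k: "k \<in> {1..t}" for i k
  proof -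
    consider "x \<in> C k \<longleftrightarrow> z \<in> C k" | "x \<in> C k" "z \<notin> C k" | "z \<in> C k" "x \<notin> C k"
      by blast
    then show ?thesis
    proof cases
      case 1
      then show ?thesis using card_swap_same_side[OF 1, of r i] bound[OF i k] by simp
    next
      case 2
      then have "k = a" using group_unique[OF k a(1)] a(2) by blast
      then show ?thesis
        using card_swap_cross[OF 2 finite_group[OF k], of r i] rz bound[OF i k] gain[of i]
        by (cases "rs x \<le> i \<and> i < r x") auto
    next
      case 3
      then show ?thesis
        using card_swap_cross[OF 3 finite_group[OF k], of r i] rz bound[OF i k]
        by (simp add: Transposition.transpose_commute[of x z])
    qed
  qed
  moreover have "?r' \<in> rankings U"
    using r z(1) group_subset[OF a(1)] a(2) by (intro rankings_swap) (auto simp: feasible_def)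
  ultimately show ?thesis
    by (simp add: feasible_def)
qed

end

locale ranking_scores = group_constraints +
  fixes f :: "nat \<Rightarrow> real"
  assumes f_antitone: "\<forall>i j. 1 \<le> i \<longrightarrow> i \<le> j \<longrightarrow> j \<le> card U \<longrightarrow> f j \<le> f i"
begin

lemma swap_forward_prefix_score_le:
  assumes "r \<in> rankings U" "set us \<subseteq> U" "m < length us"
    and "v \<in> U" "v \<notin> set (take m us)" "r v \<le> r (us ! m)"
  shows "prefix_score_le f us r (r \<circ> Transposition.transpose (us ! m) v)"
proof -
  have "us ! m \<in> U" using assms(2,3) nth_mem by blast
  then have "f (r (us ! m)) \<le> f (r v)"
    using ranking_range[OF assms(1)] assms(4,6) by (intro f_antitone[rule_format]) auto
  then show ?thesis
    unfolding prefix_score_le_def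
    using nth_mem_take_if_later_mem_take[OF assms(3,5)] by (intro allI score_swap_mono) auto
qed

lemma group_min_swap:
  assumes us: "distinct us" "set us = U" "m < length us" and r: "r \<in> feasible U t C ub"
    and a: "a \<in> {1..t}" "us ! m \<in> C a"
  shows "\<exists>r'\<in>feasible U t C ub. (\<forall>u\<in>set (take m us). r' u = r u) \<and>
           (\<forall>u\<in>C a - set (take m us). r' (us ! m) \<le> r' u) \<and> prefix_score_le f us r r'"
proof -
  define T where "T = set (take m us)"
  define x where "x = us ! m"
  have xT: "x \<notin> T"
    using us by (simp add: x_def T_def nth_not_mem_take)
  have "finite (C a - T)" "x \<in> C a - T"
    using finite_group[OF a(1)] a(2) xT by (auto simp: x_def)
  then obtain y where y: "y \<in> C a - T" and y_min: "\<forall>u\<in>C a - T. r y \<le> r u"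
    using arg_min_if_finite[of "C a - T" r] by (metis empty_iff not_le)
  define r' where "r' = r \<circ> Transposition.transpose x y"
  have "r' \<in> feasible U t C ub"
    unfolding r'_def using r a y by (intro feasible_swap_within_group) (auto simp: x_def)
  moreover have "\<forall>u\<in>T. r' u = r u"
  proof
    fix u assume "u \<in> T"
    then have "u \<noteq> x" "u \<noteq> y" using xT y by auto
    then show "r' u = r u" by (simp add: r'_def)
  qed
  moreover have "\<forall>u\<in>C a - T. r' x \<le> r' u"
    using y y_min \<open>x \<in> C a - T\<close> by (auto simp: r'_def Transposition.transpose_def)
  moreover have "prefix_score_le f us r r'"
    unfolding r'_def x_def
    using r us y y_min \<open>x \<in> C a - T\<close> group_subset[OF a(1)]
    by (intro swap_forward_prefix_score_le) (auto simp: feasible_def T_def x_def)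
  ultimately show ?thesis by (auto simp: T_def x_def)
qed

lemma swap_to_target_rank:
  assumes us: "distinct us" "set us = U" "m < length us"
    and rs: "rs \<in> feasible U t C ub" and r: "r \<in> feasible U t C ub"
    and a: "a \<in> {1..t}" "us ! m \<in> C a"
    and agree: "\<forall>u\<in>set (take m us). r u = rs u"
    and group_min: "\<forall>u\<in>C a - set (take m us). r (us ! m) \<le> r u"
    and less: "rs (us ! m) < r (us ! m)"
  shows "\<exists>r'\<in>feasible U t C ub. (\<forall>u\<in>set (take (Suc m) us). r' u = rs u) \<and> prefix_score_le f us r r'"
proof -
  define T where "T = set (take m us)"
  define x where "x = us ! m"
  have xU: "x \<in> U" and xT: "x \<notin> T"
    using us by (auto simp: x_def T_def nth_not_mem_take)
  have agree_T: "\<forall>u\<in>T. r u = rs u" and min_T: "\<forall>u\<in>C a - T. r x \<le> r u"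
    using agree group_min by (simp_all add: T_def x_def)
  have rk: "rs \<in> rankings U" "r \<in> rankings U"
    using rs r by (simp_all add: feasible_def)
  obtain z where z: "z \<in> U" "r z = rs x"
    using ranking_surj[OF rk(2)] ranking_range[OF rk(1) xU] by blast
  have zT: "z \<notin> T"
  proof
    assume "z \<in> T"
    then have "rs z = rs x" using agree_T z(2) by simp
    then have "z = x"
      using inj_onD[OF ranking_inj_on[OF rk(1)]] z(1) xU by blast
    then show False using xT \<open>z \<in> T\<close> by simp
  qed
  have za: "z \<notin> C a"
  proof
    assume "z \<in> C a"
    then have "r x \<le> r z" using min_T zT by blast
    then show False using z(2) less by (simp add: x_def)
  qed
  define r' where "r' = r \<circ> Transposition.transpose x z"
  have "r' \<in> feasible U t C ub"
  proof -
    have "\<forall>u\<in>C a. r u < r x \<longrightarrow> r u = rs u"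
      using min_T agree_T by (meson DiffI not_le)
    then show ?thesis
      unfolding r'_def using less z za a by (intro feasible_swap_down[OF r rs]) (auto simp: x_def)
  qed
  moreover have "\<forall>u\<in>insert x T. r' u = rs u"
  proof
    fix u assume u: "u \<in> insert x T"
    show "r' u = rs u"
    proof (cases "u = x")
      case True
      then show ?thesis using z(2) by (simp add: r'_def)
    next
      case False
      then have "u \<in> T" "u \<noteq> z" using u zT by auto
      then show ?thesis using False agree_T by (simp add: r'_def)
    qed
  qed
  moreover have "prefix_score_le f us r r'"
    unfolding r'_def x_def using rk(2) us z zT less
    by (intro swap_forward_prefix_score_le) (auto simp: T_def x_def)
  moreover have "set (take (Suc m) us) = insert x T"
    using us(3) by (simp add: T_def x_def take_Suc_conv_app_nth)
  ultimately show ?thesis by auto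
qed

lemma lexmin_exchange_step:
  assumes us: "distinct us" "set us = U" "m < length us"
    and rs: "rs \<in> feasible U t C ub" and lexmin: "\<forall>r\<in>feasible U t C ub. map rs us \<le> map r us"
    and r: "r \<in> feasible U t C ub" and agree: "\<forall>u\<in>set (take m us). r u = rs u"
  shows "\<exists>r'\<in>feasible U t C ub. (\<forall>u\<in>set (take (Suc m) us). r' u = rs u) \<and> prefix_score_le f us r r'"
proof -
  define x where "x = us ! m"
  have "x \<in> U"
    using nth_mem[OF us(3)] us(2) by (simp add: x_def)
  then obtain a where a: "a \<in> {1..t}" "x \<in> C a"
    using group_exists by blast
  obtain r1 where r1: "r1 \<in> feasible U t C ub" and r1_agree: "\<forall>u\<in>set (take m us). r1 u = rs u"
    and r1_min: "\<forall>u\<in>C a - set (take m us). r1 x \<le> r1 u" and r1_le: "prefix_score_le f us r r1"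
    using group_min_swap[OF us r a[unfolded x_def]] agree by (auto simp: x_def)
  have "\<not> map r1 us < map rs us"
    using lexmin r1 by (simp add: not_less)
  then have "rs x \<le> r1 x"
    using lex_less_map_first_difference[of m us r1 rs] us(3) r1_agree by (force simp: x_def)
  then consider "rs x = r1 x" | "rs x < r1 x" by linarith
  then show ?thesis
  proof cases
    case 1
    then have "\<forall>u\<in>set (take (Suc m) us). r1 u = rs u"
      using r1_agree us(3) by (simp add: x_def take_Suc_conv_app_nth)
    then show ?thesis using r1 r1_le by blast
  next
    case 2
    then obtain r2 where "r2 \<in> feasible U t C ub" "\<forall>u\<in>set (take (Suc m) us). r2 u = rs u"
      and "prefix_score_le f us r1 r2"
      using swap_to_target_rank[OF us rs r1 a[unfolded x_def] r1_agree] r1_min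
      unfolding x_def by blast
    then show ?thesis
      using r1_le prefix_score_le_trans by blast
  qed
qed

theorem exists_prefix_optimal_ranking:
  assumes "feasible U t C ub \<noteq> {}" "distinct us" "set us = U"
  shows "\<exists>rs\<in>feasible U t C ub. \<forall>r\<in>feasible U t C ub. prefix_score_le f us r rs"
proof -
  obtain rs where rs: "rs \<in> feasible U t C ub" and lexmin: "\<forall>r\<in>feasible U t C ub. map rs us \<le> map r us"
    using arg_min_if_finite[OF finite_feasible assms(1), of "\<lambda>r. map r us"] by (metis not_le)
  have reach: "\<exists>r'\<in>feasible U t C ub. (\<forall>u\<in>set (take m us). r' u = rs u) \<and> prefix_score_le f us r r'"
    if r: "r \<in> feasible U t C ub" and m: "m \<le> length us" for r m
    using m
  proof (induction m)
    case 0
    show ?case using r by (intro bexI[of _ r]) auto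
  next
    case (Suc m)
    then obtain r' where "r' \<in> feasible U t C ub" "\<forall>u\<in>set (take m us). r' u = rs u"
      and "prefix_score_le f us r r'" by auto
    with lexmin_exchange_step[OF assms(2,3) _ rs lexmin] Suc.prems show ?case
      by (meson Suc_le_lessD prefix_score_le_trans)
  qed
  have "prefix_score_le f us r rs" if r: "r \<in> feasible U t C ub" for r
  proof -
    obtain r' where r': "r' \<in> feasible U t C ub" "\<forall>u\<in>U. r' u = rs u" "prefix_score_le f us r r'"
      using reach[OF r order_refl] assms(3) by auto
    then have "r' = rs"
      using rs by (intro ranking_eqI[of _ U]) (auto simp: feasible_def)
    then show ?thesis using r'(3) by simp
  qed
  then show ?thesis using rs by blast
qed

lemma exists_ranking_weighted_surplus:
  fixes g lam w :: "'a \<Rightarrow> real"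
  assumes ne: "feasible U t C ub \<noteq> {}"
    and H: "\<forall>X\<subseteq>U. Max ((\<lambda>r. \<Sum>u\<in>X. util f g r u) ` feasible U t C ub) \<ge> (\<Sum>u\<in>X. lam u)"
    and w: "\<forall>u\<in>U. 0 \<le> w u"
  shows "\<exists>r\<in>feasible U t C ub. 0 \<le> (\<Sum>u\<in>U. w u * (util f g r u - lam u))"
proof -
  obtain xs where xs: "distinct xs" "set xs = U"
    using finite_distinct_list[OF finite_U] by blast
  define us where "us = sort_key (\<lambda>u. - w u) xs"
  have us: "distinct us" "set us = U"
    using xs by (simp_all add: us_def)
  have us_sorted: "sorted_wrt (\<lambda>a b. w b \<le> w a) us"
    using sorted_sort_key[of "\<lambda>u. - w u" xs] by (simp add: us_def sorted_map)
  obtain rs where rs: "rs \<in> feasible U t C ub" and opt: "\<forall>r\<in>feasible U t C ub. prefix_score_le f us r rs"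
    using exists_prefix_optimal_ranking[OF ne us] by blast
  have "0 \<le> (\<Sum>u\<in>set (take k us). util f g rs u - lam u)" for k
  proof -
    define X where "X = set (take k us)"
    have "X \<subseteq> U" using us(2) by (auto simp: X_def dest: in_set_takeD)
    obtain r where r: "r \<in> feasible U t C ub"
      and r_max: "Max ((\<lambda>r. \<Sum>u\<in>X. util f g r u) ` feasible U t C ub) = (\<Sum>u\<in>X. util f g r u)"
      using Max_in[of "(\<lambda>r. \<Sum>u\<in>X. util f g r u) ` feasible U t C ub"] finite_feasible ne by fastforce
    have "(\<Sum>u\<in>X. lam u) \<le> (\<Sum>u\<in>X. util f g r u)"
      using H \<open>X \<subseteq> U\<close> r_max by metis
    also have "\<dots> \<le> (\<Sum>u\<in>X. util f g rs u)"
      using opt r by (simp add: sum_util_eq_score prefix_score_le_def X_def)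
    finally show ?thesis
      by (simp add: X_def sum_subtractf)
  qed
  then have "0 \<le> (\<Sum>u\<in>set us. w u * (util f g rs u - lam u))"
    using us w by (intro abel_summation_nonneg[OF us(1) us_sorted]) auto
  then show ?thesis using rs us(2) by auto
qed

lemma exists_distribution_above:
  fixes g lam :: "'a \<Rightarrow> real"
  assumes ne: "feasible U t C ub \<noteq> {}"
    and H: "\<forall>X\<subseteq>U. Max ((\<lambda>r. \<Sum>u\<in>X. util f g r u) ` feasible U t C ub) \<ge> (\<Sum>u\<in>X. lam u)"
  shows "\<exists>D. set_pmf D \<subseteq> feasible U t C ub \<and> (\<forall>u\<in>U. lam u \<le> exp_util f g D u)"
proof -
  let ?S = "feasible U t C ub"
  obtain p where p: "\<forall>r\<in>?S. 0 \<le> p r" "(\<Sum>r\<in>?S. p r) = 1"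
    "\<forall>u\<in>U. 0 \<le> (\<Sum>r\<in>?S. p r * (util f g r u - lam u))"
    using ville_alternative[OF finite_feasible finite_U, of "\<lambda>r u. util f g r u - lam u"]
      exists_ranking_weighted_surplus[OF ne H] by blast
  obtain D where D: "set_pmf D \<subseteq> ?S" "\<forall>h. measure_pmf.expectation D h = (\<Sum>r\<in>?S. p r * h r)"
    using exists_pmf_with_weights[OF finite_feasible p(1,2)] by blast
  have "lam u \<le> exp_util f g D u" if "u \<in> U" for u
  proof -
    have "exp_util f g D u - lam u = (\<Sum>r\<in>?S. p r * (util f g r u - lam u))"
      using p(2) by (simp add: exp_util_def D(2) right_diff_distrib sum_subtractf
          flip: sum_distrib_right)
    moreover have "0 \<le> (\<Sum>r\<in>?S. p r * (util f g r u - lam u))"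
      using p(3) that by blast
    ultimately show ?thesis by linarith
  qed
  then show ?thesis using D(1) by blast
qed

end

theorem lemma2:
  fixes U :: "'a set" and t :: nat and C :: "nat \<Rightarrow> 'a set"
    and ub :: "nat \<Rightarrow> nat \<Rightarrow> int"
    and f :: "nat \<Rightarrow> real" and g :: "'a \<Rightarrow> real" and lam :: "'a \<Rightarrow> real"
  assumes finU: "finite U"
    and part_cover: "(\<Union>k\<in>{1..t}. C k) = U"
    and part_disj: "\<forall>k\<in>{1..t}. \<forall>l\<in>{1..t}. k \<noteq> l \<longrightarrow> C k \<inter> C l = {}"
    and f_mono: "\<forall>i j. 1 \<le> i \<longrightarrow> i \<le> j \<longrightarrow> j \<le> card U \<longrightarrow> f j \<le> f i"
    and S_ne: "feasible U t C ub \<noteq> {}"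
  shows "(\<exists>D :: ('a \<Rightarrow> nat) pmf. set_pmf D \<subseteq> feasible U t C ub \<and>
            (\<forall>u\<in>U. exp_util f g D u \<ge> lam u))
     \<longleftrightarrow> (\<forall>X\<subseteq>U. Max ((\<lambda>r. \<Sum>u\<in>X. util f g r u) ` feasible U t C ub) \<ge> (\<Sum>u\<in>X. lam u))"
proof -
  interpret ranking_scores U t C ub f
    using finU part_cover part_disj f_mono by unfold_locales
  show ?thesis
  proof
    assume "\<exists>D :: ('a \<Rightarrow> nat) pmf. set_pmf D \<subseteq> feasible U t C ub \<and>
      (\<forall>u\<in>U. exp_util f g D u \<ge> lam u)"
    then obtain D :: "('a \<Rightarrow> nat) pmf" where D: "set_pmf D \<subseteq> feasible U t C ub"
      "\<forall>u\<in>U. lam u \<le> exp_util f g D u" by blast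
    have "(\<Sum>u\<in>X. lam u) \<le> Max ((\<lambda>r. \<Sum>u\<in>X. util f g r u) ` feasible U t C ub)" if "X \<subseteq> U" for X
    proof -
      have "(\<Sum>u\<in>X. lam u) \<le> (\<Sum>u\<in>X. exp_util f g D u)"
        using D(2) that by (intro sum_mono) auto
      also have "\<dots> \<le> Max ((\<lambda>r. \<Sum>u\<in>X. util f g r u) ` feasible U t C ub)"
        unfolding exp_util_def by (rule sum_expectation_le_Max[OF finite_feasible D(1)])
      finally show ?thesis .
    qed
    then show "\<forall>X\<subseteq>U. Max ((\<lambda>r. \<Sum>u\<in>X. util f g r u) ` feasible U t C ub) \<ge> (\<Sum>u\<in>X. lam u)"
      by blast
  qed (use exists_distribution_above[OF S_ne] in blast)
qed

end
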